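(* Let $\mathbb{K}$ be a perfect field and $I\subset\mathbb{K}[X_1,\dots,X_n]$ a zero-dimensional $\mathfrak{m}$-primary ideal for some maximal ideal $\mathfrak{m}$, with $D=\deg(I)$. Let the minimal polynomial of $X_n$ in $\mathbb{K}[X_1,\dots,X_n]/I$ be $P^e$ with $P\in\mathbb{K}[Z]$ irreducible of degree $f$. Let $\mathbb{L}=\mathbb{K}[Z]/\langle P\rangle$, $\zeta$ the residue class of $Z$ in $\mathbb{L}$, and $I'=I+\langle(X_n-\zeta)^e\rangle\subset\mathbb{L}[X_1,\dots,X_n]$ (where $I$ denotes the extended ideal). Then $\deg(I')=D/f$.
   Context: The degree $\deg(J)$ of a zero-dimensional ideal $J$ in a polynomial ring over a field $F$ is the $F$-vector space dimension of the quotient ring. *)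

theory Defs
  imports "HOL-Library.Poly_Mapping" "HOL-Computational_Algebra.Polynomial"
begin

text \<open>Multivariate polynomials over 'a in the variables of the finite type 'v
  (standing for X_1,...,X_n).\<close>
type_synonym ('v, 'a) mpoly = "('v \<Rightarrow>\<^sub>0 nat) \<Rightarrow>\<^sub>0 'a"

definition mconst :: "'a::zero \<Rightarrow> ('v, 'a) mpoly" where
  "mconst c = Poly_Mapping.single 0 c"

definition mvar :: "'v \<Rightarrow> ('v, 'a::{zero,one}) mpoly" where
  "mvar v = Poly_Mapping.single (Poly_Mapping.single v 1) 1"

definition is_ideal :: "'r::comm_ring_1 set \<Rightarrow> bool" where
  "is_ideal J \<longleftrightarrow> 0 \<in> J \<and> (\<forall>a\<in>J. \<forall>b\<in>J. a + b \<in> J) \<and> (\<forall>a\<in>J. \<forall>r. r * a \<in> J)"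

definition ideal_gen :: "'r::comm_ring_1 set \<Rightarrow> 'r set" where
  "ideal_gen S = \<Inter>{J. is_ideal J \<and> S \<subseteq> J}"

definition is_maximal_ideal :: "'r::comm_ring_1 set \<Rightarrow> bool" where
  "is_maximal_ideal M \<longleftrightarrow> is_ideal M \<and> M \<noteq> UNIV \<and>
     (\<forall>J. is_ideal J \<and> M \<subseteq> J \<longrightarrow> J = M \<or> J = UNIV)"

definition radical :: "'r::comm_ring_1 set \<Rightarrow> 'r set" where
  "radical J = {a. \<exists>k. a ^ k \<in> J}"

definition is_primary_for :: "'r::comm_ring_1 set \<Rightarrow> 'r set \<Rightarrow> bool" where
  "is_primary_for J M \<longleftrightarrow> is_ideal J \<and> J \<noteq> UNIV \<and>
     (\<forall>a b. a * b \<in> J \<and> a \<notin> J \<longrightarrow> b \<in> radical J) \<and> radical J = M"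

definition spans_quot :: "('v, 'a::field) mpoly set \<Rightarrow> ('v, 'a) mpoly set \<Rightarrow> bool" where
  "spans_quot J B \<longleftrightarrow> (\<forall>p. \<exists>c. p - (\<Sum>b\<in>B. mconst (c b) * b) \<in> J)"

definition zero_dimensional :: "('v, 'a::field) mpoly set \<Rightarrow> bool" where
  "zero_dimensional J \<longleftrightarrow> is_ideal J \<and> (\<exists>B. finite B \<and> spans_quot J B)"

text \<open>Degree = vector space dimension of the quotient (size of a minimal spanning set,
  i.e. of a basis).\<close>
definition ideal_deg :: "('v, 'a::field) mpoly set \<Rightarrow> nat" where
  "ideal_deg J = (LEAST d. \<exists>B. finite B \<and> card B = d \<and> spans_quot J B)"

definition eval_upoly :: "'a::comm_ring_1 poly \<Rightarrow> ('v, 'a) mpoly \<Rightarrow> ('v, 'a) mpoly" where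
  "eval_upoly q x = poly (map_poly mconst q) x"

definition is_minpoly_mod :: "('v, 'a::field) mpoly set \<Rightarrow> ('v, 'a) mpoly \<Rightarrow> 'a poly \<Rightarrow> bool" where
  "is_minpoly_mod J x q \<longleftrightarrow> lead_coeff q = 1 \<and> eval_upoly q x \<in> J \<and>
     (\<forall>r. r \<noteq> 0 \<and> eval_upoly r x \<in> J \<longrightarrow> degree q \<le> degree r)"

definition perfect_field :: "'a::field itself \<Rightarrow> bool" where
  "perfect_field _ \<longleftrightarrow> CHAR('a) = 0 \<or> (\<forall>x::'a. \<exists>y. y ^ CHAR('a) = x)"

definition is_ring_hom :: "('a::comm_ring_1 \<Rightarrow> 'b::comm_ring_1) \<Rightarrow> bool" where
  "is_ring_hom \<phi> \<longleftrightarrow> \<phi> 0 = 0 \<and> \<phi> 1 = 1 \<and> (\<forall>x y. \<phi> (x + y) = \<phi> x + \<phi> y) \<and>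
     (\<forall>x y. \<phi> (x * y) = \<phi> x * \<phi> y)"

text \<open>(L, \<phi>, \<zeta>) presents L as K[Z]/<P> with \<zeta> the class of Z: \<phi> : K \<rightarrow> L is a
  field embedding, \<zeta> is a root of P and L = K[\<zeta>]. For irreducible P this determines
  L up to K-isomorphism.\<close>
definition is_stem_field :: "('a::field \<Rightarrow> 'b::field) \<Rightarrow> 'b \<Rightarrow> 'a poly \<Rightarrow> bool" where
  "is_stem_field \<phi> \<zeta> P \<longleftrightarrow> is_ring_hom \<phi> \<and> poly (map_poly \<phi> P) \<zeta> = 0 \<and>
     (\<forall>y. \<exists>q. y = poly (map_poly \<phi> q) \<zeta>)"

definition map_mpoly :: "('a::zero \<Rightarrow> 'b::zero) \<Rightarrow> ('v, 'a) mpoly \<Rightarrow> ('v, 'b) mpoly" where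
  "map_mpoly \<phi> p = Poly_Mapping.map \<phi> p"

end

theory Submission
  imports Defs "Jordan_Normal_Form.Char_Poly" "HOL-Library.Function_Algebras"
begin

text \<open>Since \<open>\<K>\<close> is perfect, \<open>P\<close> is separable, so Newton iteration lifts the root \<open>X\<^sub>n\<close> of
  \<open>P\<^sup>e\<close> modulo \<open>I\<close> to some \<open>t \<in> \<K>[X]\<close> with \<open>P(t) \<in> I\<close> and \<open>(X\<^sub>n - t)\<^sup>e \<in> I\<close>. Modulo \<open>I'\<close>
  the element \<open>\<zeta>\<close> is then congruent to \<open>t\<close>, so every polynomial over \<open>\<L>\<close> is congruent to one
  over \<open>\<K>\<close> and \<open>\<K>[X]/I \<rightarrow> \<L>[X]/I'\<close> is onto. It is also injective: writing
  \<open>\<L>[X] = \<K>[X][Z]/\<langle>P\<rangle>\<close>, the substitution \<open>Z \<mapsto> t\<close> sends every preimage of \<open>I'\<close> into \<open>I\<close>.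
  So \<open>\<K>[X]/I \<cong> \<L>[X]/I'\<close> as \<open>\<K>\<close>-spaces, and \<open>dim\<^sub>\<K> = f \<cdot> dim\<^sub>\<L>\<close> gives \<open>D = f \<cdot> deg I'\<close>.\<close>

section \<open>Dimension of a quotient space\<close>

text \<open>The scalar multiplication is explicit because the same quotient is measured both over \<open>\<K>\<close>
  and over \<open>\<L>\<close>.\<close>

definition spans_mod :: "('k \<Rightarrow> 'm \<Rightarrow> 'm) \<Rightarrow> 'm::ab_group_add set \<Rightarrow> 'i set \<Rightarrow> ('i \<Rightarrow> 'm) \<Rightarrow> bool" where
  "spans_mod scale J A v \<longleftrightarrow> (\<forall>p. \<exists>c. p - (\<Sum>a\<in>A. scale (c a) (v a)) \<in> J)"

definition independent_mod ::
  "('k::zero \<Rightarrow> 'm \<Rightarrow> 'm) \<Rightarrow> 'm::ab_group_add set \<Rightarrow> 'i set \<Rightarrow> ('i \<Rightarrow> 'm) \<Rightarrow> bool" where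
  "independent_mod scale J A v \<longleftrightarrow> (\<forall>c. (\<Sum>a\<in>A. scale (c a) (v a)) \<in> J \<longrightarrow> (\<forall>a\<in>A. c a = 0))"

definition dim_mod :: "('k \<Rightarrow> 'm \<Rightarrow> 'm) \<Rightarrow> 'm::ab_group_add set \<Rightarrow> nat" where
  "dim_mod scale J = (LEAST d. \<exists>B. finite B \<and> card B = d \<and> spans_mod scale J B (\<lambda>x. x))"

lemma sum_fun_apply: "(\<Sum>a\<in>A. g a) x = (\<Sum>a\<in>A. g a x)"
  by (induct A rule: infinite_finite_induct) auto

context vector_space
begin

lemma spans_mod_image:
  assumes "finite A" "spans_mod scale J A v"
  shows "spans_mod scale J (v ` A) (\<lambda>x. x)"
  unfolding spans_mod_def
proof
  fix p
  obtain c where c: "p - (\<Sum>a\<in>A. c a *s v a) \<in> J"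
    using assms(2) unfolding spans_mod_def by blast
  define c' where "c' w = (\<Sum>a\<in>{a\<in>A. v a = w}. c a)" for w
  have "(\<Sum>w\<in>v`A. c' w *s w) = (\<Sum>w\<in>v`A. \<Sum>a\<in>{a\<in>A. v a = w}. c a *s v a)"
    unfolding c'_def scale_sum_left by (intro sum.cong) auto
  also have "\<dots> = (\<Sum>a\<in>A. c a *s v a)"
    using sum.image_gen[OF assms(1), of "\<lambda>a. c a *s v a" v] by simp
  finally show "\<exists>c. p - (\<Sum>w\<in>v`A. c w *s w) \<in> J"
    using c by metis
qed

lemma independent_mod_coefficients:
  assumes J: "subspace J" and A: "independent_mod scale J A v"
    and c: "\<And>a. v a - (\<Sum>b\<in>B. c a b *s b) \<in> J"
    and d: "\<And>b. b \<in> B \<Longrightarrow> (\<Sum>a\<in>A. d a * c a b) = 0"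
  shows "\<forall>a\<in>A. d a = 0"
proof -
  have "(\<Sum>a\<in>A. d a *s (v a - (\<Sum>b\<in>B. c a b *s b))) \<in> J"
    using J by (intro subspace_sum subspace_scale c)
  also have "(\<Sum>a\<in>A. d a *s (v a - (\<Sum>b\<in>B. c a b *s b)))
      = (\<Sum>a\<in>A. d a *s v a) - (\<Sum>a\<in>A. \<Sum>b\<in>B. (d a * c a b) *s b)"
    by (simp add: scale_right_diff_distrib scale_sum_right sum_subtractf)
  also have "(\<Sum>a\<in>A. \<Sum>b\<in>B. (d a * c a b) *s b) = (\<Sum>b\<in>B. (\<Sum>a\<in>A. d a * c a b) *s b)"
    by (subst sum.swap) (simp add: scale_sum_left)
  finally have "(\<Sum>a\<in>A. d a *s v a) \<in> J"
    using d by simp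
  then show ?thesis
    using A unfolding independent_mod_def by blast
qed

text \<open>The coordinate vectors with respect to \<open>B\<close> of a family independent modulo \<open>J\<close> are
  independent in \<open>'a\<^sup>B\<close>.\<close>

lemma independent_mod_card_le:
  assumes J: "subspace J" and fA: "finite A" and A: "independent_mod scale J A v"
    and fB: "finite B" and B: "spans_mod scale J B (\<lambda>x. x)"
  shows "card A \<le> card B"
proof -
  interpret F: vector_space "\<lambda>(c::'a) (g::'b \<Rightarrow> 'a). (\<lambda>x. c * g x)"
    by unfold_locales (auto simp: fun_eq_iff algebra_simps)
  have "\<forall>a. \<exists>c. v a - (\<Sum>b\<in>B. c b *s b) \<in> J"
    using B unfolding spans_mod_def by blast
  then obtain c where c: "\<And>a. v a - (\<Sum>b\<in>B. c a b *s b) \<in> J"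
    by metis
  note coeffs = independent_mod_coefficients[OF J A c]
  define w where "w a = (\<lambda>x. if x \<in> B then c a x else 0)" for a
  define \<delta> where "\<delta> b = (\<lambda>x::'b. if x = b then (1::'a) else 0)" for b
  have w_sum: "w a = (\<Sum>b\<in>B. (\<lambda>x. c a b * \<delta> b x))" for a
  proof
    fix x
    have "(\<Sum>b\<in>B. (\<lambda>x. c a b * \<delta> b x)) x = (\<Sum>b\<in>B. c a b * \<delta> b x)"
      by (rule sum_fun_apply)
    also have "\<dots> = (\<Sum>b\<in>B. if b = x then c a b else 0)"
      by (intro sum.cong) (auto simp: \<delta>_def)
    finally show "w a x = (\<Sum>b\<in>B. (\<lambda>x. c a b * \<delta> b x)) x"
      using fB by (simp add: w_def)
  qed
  have span: "w ` A \<subseteq> F.span (\<delta> ` B)"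
    unfolding w_sum by (auto intro: F.span_sum F.span_scale F.span_base)
  have inj: "inj_on w A"
  proof (rule inj_onI, rule ccontr)
    fix a1 a2 assume a: "a1 \<in> A" "a2 \<in> A" "w a1 = w a2" "a1 \<noteq> a2"
    define d where "d a = (if a = a1 then 1 else if a = a2 then -1 else (0::'a))" for a
    have "(\<Sum>a\<in>A. d a * c a b) = (\<Sum>a\<in>{a1, a2}. d a * c a b)" for b
      using a fA by (intro sum.mono_neutral_right) (auto simp: d_def)
    moreover have "c a1 b = c a2 b" if "b \<in> B" for b
      using fun_cong[OF a(3), of b] that by (simp add: w_def)
    ultimately have "(\<Sum>a\<in>A. d a * c a b) = 0" if "b \<in> B" for b
      using a(4) that by (simp add: d_def)
    then have "\<forall>a\<in>A. d a = 0"
      by (rule coeffs)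
    then show False
      using a by (auto simp: d_def)
  qed
  have "F.independent (w ` A)"
  proof (rule F.independent_if_scalars_zero)
    fix f z assume "(\<Sum>x\<in>w ` A. (\<lambda>y. f x * x y)) = 0" and z: "z \<in> w ` A"
    then have sum0: "(\<Sum>a\<in>A. (\<lambda>y. f (w a) * w a y)) = 0"
      by (simp add: sum.reindex[OF inj])
    have "(\<Sum>a\<in>A. f (w a) * c a b) = 0" if "b \<in> B" for b
    proof -
      have "(\<Sum>a\<in>A. (\<lambda>y. f (w a) * w a y)) b = 0"
        using sum0 by simp
      then show ?thesis
        using that by (simp add: sum_fun_apply w_def)
    qed
    then have "\<forall>a\<in>A. f (w a) = 0"
      by (rule coeffs)
    then show "f z = 0"
      using z by auto
  qed (use fA in simp)
  then have "card (w ` A) \<le> card (\<delta> ` B)"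
    using F.independent_span_bound[OF _ _ span] fB by auto
  also have "\<dots> \<le> card B"
    using fB by (rule card_image_le)
  finally show ?thesis
    using card_image[OF inj] by simp
qed

lemma dim_mod_eq_card:
  assumes J: "subspace J" and fA: "finite A"
    and span: "spans_mod scale J A v" and indep: "independent_mod scale J A v"
  shows "dim_mod scale J = card A"
proof -
  let ?P = "\<lambda>d. \<exists>B. finite B \<and> card B = d \<and> spans_mod scale J B (\<lambda>x. x)"
  have "?P (card (v ` A))"
    using spans_mod_image[OF fA span] fA by blast
  then have le: "dim_mod scale J \<le> card (v ` A)"
    unfolding dim_mod_def by (rule Least_le)
  have "?P (dim_mod scale J)"
    unfolding dim_mod_def by (rule LeastI) fact
  then obtain B where B: "finite B" "card B = dim_mod scale J" "spans_mod scale J B (\<lambda>x. x)"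
    by blast
  have "card A \<le> card B"
    by (rule independent_mod_card_le[OF J fA indep B(1) B(3)])
  moreover have "card (v ` A) \<le> card A"
    using fA by (rule card_image_le)
  ultimately show ?thesis
    using le B(2) by linarith
qed

lemma spans_mod_obtain_basis:
  assumes J: "subspace J" and "finite B" and "spans_mod scale J B (\<lambda>x. x)"
  obtains C where "finite C" "spans_mod scale J C (\<lambda>x. x)" "independent_mod scale J C (\<lambda>x. x)"
  using assms(2,3)
proof (induct "card B" arbitrary: B rule: less_induct)
  case less
  show ?case
  proof (cases "independent_mod scale J B (\<lambda>x. x)")
    case True
    then show ?thesis
      using less by blast
  next
    case False
    then obtain c b0 where c: "(\<Sum>b\<in>B. c b *s b) \<in> J" and b0: "b0 \<in> B" "c b0 \<noteq> 0"
      unfolding independent_mod_def by blast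
    have "spans_mod scale J (B - {b0}) (\<lambda>x. x)"
      unfolding spans_mod_def
    proof
      fix p
      obtain d where d: "p - (\<Sum>b\<in>B. d b *s b) \<in> J"
        using less(4) unfolding spans_mod_def by blast
      have split: "(\<Sum>b\<in>B. g b *s b) = g b0 *s b0 + (\<Sum>b\<in>B - {b0}. g b *s b)" for g
        using less(3) b0 by (simp add: sum.remove)
      define d' where "d' b = d b - d b0 * c b / c b0" for b
      have "(\<Sum>b\<in>B - {b0}. d' b *s b)
          = (\<Sum>b\<in>B - {b0}. d b *s b) - (d b0 / c b0) *s (\<Sum>b\<in>B - {b0}. c b *s b)"
        by (simp add: d'_def scale_left_diff_distrib sum_subtractf scale_sum_right)
      then have "p - (\<Sum>b\<in>B - {b0}. d' b *s b)
          = (p - (\<Sum>b\<in>B. d b *s b)) + (d b0 / c b0) *s (\<Sum>b\<in>B. c b *s b)"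
        unfolding split using b0 by (simp add: scale_right_distrib algebra_simps)
      also have "\<dots> \<in> J"
        using J d c by (intro subspace_add subspace_scale)
      finally show "\<exists>c. p - (\<Sum>b\<in>B - {b0}. c b *s b) \<in> J"
        by blast
    qed
    moreover have "card (B - {b0}) < card B"
      using less(3) b0 by (meson card_Diff1_less)
    ultimately show ?thesis
      using less(1,2,3) by blast
  qed
qed

end

lemma vector_space_scale_hom:
  "comm_ring_hom (s :: 'a::field \<Rightarrow> 'r::comm_ring_1) \<Longrightarrow> vector_space (\<lambda>c p. s c * p)"
proof -
  assume "comm_ring_hom s"
  then interpret comm_ring_hom s .
  show ?thesis
    by unfold_locales (simp_all add: algebra_simps hom_add hom_mult)
qed

section \<open>Ideals\<close>

lemma ideal_0: "is_ideal J \<Longrightarrow> 0 \<in> J"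
  unfolding is_ideal_def by blast

lemma ideal_add: "is_ideal J \<Longrightarrow> a \<in> J \<Longrightarrow> b \<in> J \<Longrightarrow> a + b \<in> J"
  unfolding is_ideal_def by blast

lemma ideal_mult_left: "is_ideal J \<Longrightarrow> a \<in> J \<Longrightarrow> r * a \<in> J"
  unfolding is_ideal_def by blast

lemma ideal_mult_right: "is_ideal J \<Longrightarrow> a \<in> J \<Longrightarrow> a * r \<in> J"
  unfolding is_ideal_def by (metis mult.commute)

lemma ideal_uminus: "is_ideal J \<Longrightarrow> a \<in> J \<Longrightarrow> - a \<in> J"
  using ideal_mult_left[of J a "-1"] by simp

lemma ideal_diff_mem: "is_ideal J \<Longrightarrow> a - b \<in> J \<Longrightarrow> b \<in> J \<Longrightarrow> a \<in> J"
  using ideal_add[of J "a - b" b] by simp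

lemma ideal_sum: "is_ideal J \<Longrightarrow> (\<And>x. x \<in> A \<Longrightarrow> g x \<in> J) \<Longrightarrow> sum g A \<in> J"
  by (induct A rule: infinite_finite_induct) (auto intro: ideal_0 ideal_add)

lemma ideal_eq_UNIV: "is_ideal J \<Longrightarrow> 1 \<in> J \<Longrightarrow> J = UNIV"
  using ideal_mult_left[of J 1] by auto

lemma is_ideal_ideal_gen: "is_ideal (ideal_gen S)"
  unfolding ideal_gen_def is_ideal_def by auto

lemma ideal_gen_superset: "S \<subseteq> ideal_gen S"
  unfolding ideal_gen_def by auto

lemma ideal_gen_least: "is_ideal J \<Longrightarrow> S \<subseteq> J \<Longrightarrow> ideal_gen S \<subseteq> J"
  unfolding ideal_gen_def by auto

lemma subspace_ideal:
  assumes "comm_ring_hom (s :: 'a::field \<Rightarrow> 'r::comm_ring_1)" "is_ideal J"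
  shows "module.subspace (\<lambda>c p. s c * p) J"
proof -
  interpret vector_space "\<lambda>c p. s c * p"
    using assms(1) by (rule vector_space_scale_hom)
  show ?thesis
    using assms(2) by (auto simp: subspace_def intro: ideal_0 ideal_add ideal_mult_left)
qed

lemma poly_diff_mem_ideal:
  assumes "is_ideal J" "x - z \<in> J"
  shows "poly q x - poly q z \<in> J"
proof (induct q)
  case (pCons a q)
  have "poly (pCons a q) x - poly (pCons a q) z = x * (poly q x - poly q z) + poly q z * (x - z)"
    by (simp add: algebra_simps)
  then show ?case
    using pCons assms by (metis ideal_add ideal_mult_left)
qed (use assms in \<open>simp add: ideal_0\<close>)

lemma power_add_mem_ideal:
  fixes a b :: "'r::comm_ring_1"
  assumes J: "is_ideal J" and "a ^ m \<in> J" "b ^ n \<in> J"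
  shows "(a + b) ^ (m + n) \<in> J"
proof -
  have "of_nat (m + n choose k) * a ^ k * b ^ (m + n - k) \<in> J" if "k \<le> m + n" for k
  proof (cases "m \<le> k")
    case True
    then have "a ^ k = a ^ m * a ^ (k - m)"
      by (simp flip: power_add)
    then show ?thesis
      using ideal_mult_left[OF J assms(2), of "of_nat (m + n choose k) * a ^ (k - m) * b ^ (m + n - k)"]
      by (simp add: mult_ac)
  next
    case False
    then have "m + n - k = n + (m - k)"
      by simp
    then have "b ^ (m + n - k) = b ^ n * b ^ (m - k)"
      by (simp add: power_add)
    then show ?thesis
      using ideal_mult_left[OF J assms(3), of "of_nat (m + n choose k) * a ^ k * b ^ (m - k)"]
      by (simp add: mult_ac)
  qed
  then show ?thesis
    unfolding binomial_ring by (intro ideal_sum[OF J]) auto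
qed

text \<open>\<open>1 + n s\<close> is a unit modulo \<open>J\<close> when \<open>n\<close> is nilpotent modulo \<open>J\<close>.\<close>

lemma nilpotent_mem_ideal:
  fixes n :: "'r::comm_ring_1"
  assumes J: "is_ideal J" and "n ^ k \<in> J" "n * (1 + n * s) \<in> J"
  shows "n \<in> J"
proof -
  have geometric: "n - n * (- (n * s)) ^ j \<in> J" for j
  proof (induct j)
    case (Suc j)
    have "n - n * (- (n * s)) ^ Suc j = (n - n * (- (n * s)) ^ j) + n * (1 + n * s) * (- (n * s)) ^ j"
      by (simp add: algebra_simps)
    then show ?case
      using Suc assms by (metis ideal_add ideal_mult_right)
  qed (simp add: ideal_0[OF J])
  have "n * (- (n * s)) ^ k = n ^ k * (n * (- s) ^ k)"
    unfolding minus_mult_right power_mult_distrib by (simp add: mult_ac)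
  then have "n * (- (n * s)) ^ k \<in> J"
    using assms by (metis ideal_mult_right)
  then show ?thesis
    using ideal_diff_mem[OF J geometric] by blast
qed

section \<open>Coefficient maps of multivariate polynomials\<close>

interpretation mconst: comm_ring_hom "mconst :: 'a::comm_ring_1 \<Rightarrow> ('v, 'a) mpoly"
  by unfold_locales (auto simp: mconst_def single_add mult_single)

interpretation mconst_poly: map_poly_comm_ring_hom "mconst :: 'a::comm_ring_1 \<Rightarrow> ('v, 'a) mpoly" ..

lemma mconst_mult_single:
  "mconst c * Poly_Mapping.single k 1 = (Poly_Mapping.single k c :: ('v, 'a::comm_ring_1) mpoly)"
  by (simp add: mconst_def mult_single)

lemma lookup_mconst_mult: "Poly_Mapping.lookup (mconst c * p) k = c * Poly_Mapping.lookup p k"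
  unfolding mconst_def mult_map_scale_conv_mult[symmetric] by (simp add: Poly_Mapping.map.rep_eq when_def)

lemma mconst_eq_0_iff [simp]: "mconst c = (0 :: ('v, 'a::zero) mpoly) \<longleftrightarrow> c = 0"
  unfolding mconst_def by (metis lookup_single_eq single_zero)

lemma poly_mapping_add_single_induct:
  assumes "P 0" "\<And>f k v. P f \<Longrightarrow> P (f + Poly_Mapping.single k v)"
  shows "P p"
proof (induct p rule: Poly_Mapping.update_induct)
  case (update f a b)
  have "Poly_Mapping.update a b f = f + Poly_Mapping.single a b"
    using update(1)
    by (intro poly_mapping_eqI) (auto simp: lookup_update lookup_add lookup_single in_keys_iff when_def)
  then show ?case
    using update assms(2) by metis
qed (rule assms(1))

lemma map_mpoly_0 [simp]: "map_mpoly \<phi> 0 = 0"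
  unfolding map_mpoly_def by (rule poly_mapping_eqI) (simp add: Poly_Mapping.map.rep_eq)

lemma lookup_map_mpoly:
  "is_ring_hom \<phi> \<Longrightarrow> Poly_Mapping.lookup (map_mpoly \<phi> p) k = \<phi> (Poly_Mapping.lookup p k)"
  unfolding map_mpoly_def is_ring_hom_def by (simp add: Poly_Mapping.map.rep_eq when_def)

lemma map_mpoly_single:
  "is_ring_hom \<phi> \<Longrightarrow> map_mpoly \<phi> (Poly_Mapping.single k v) = Poly_Mapping.single k (\<phi> v)"
  unfolding map_mpoly_def is_ring_hom_def by simp

lemma map_mpoly_add:
  "is_ring_hom \<phi> \<Longrightarrow> map_mpoly \<phi> (p + q) = map_mpoly \<phi> p + map_mpoly \<phi> q"
  by (rule poly_mapping_eqI) (simp add: lookup_map_mpoly lookup_add is_ring_hom_def)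

lemma map_mpoly_mult_single:
  assumes h: "is_ring_hom \<phi>"
  shows "map_mpoly \<phi> (Poly_Mapping.single a b * q) = Poly_Mapping.single a (\<phi> b) * map_mpoly \<phi> q"
proof (induct q rule: poly_mapping_add_single_induct)
  case 1
  show ?case
    by simp
next
  case (2 f k v)
  then show ?case
    using h by (simp add: distrib_left mult_single map_mpoly_add map_mpoly_single is_ring_hom_def)
qed

lemma comm_ring_hom_map_mpoly:
  assumes h: "is_ring_hom \<phi>"
  shows "comm_ring_hom (map_mpoly \<phi> :: ('v, 'a::comm_ring_1) mpoly \<Rightarrow> ('v, 'b::comm_ring_1) mpoly)"
proof
  fix p q :: "('v, 'a) mpoly"
  show "map_mpoly \<phi> (p + q) = map_mpoly \<phi> p + map_mpoly \<phi> q"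
    using h by (rule map_mpoly_add)
  show "map_mpoly \<phi> 1 = 1"
    using map_mpoly_single[OF h, of 0 1] h by (simp add: is_ring_hom_def)
  show "map_mpoly \<phi> (p * q) = map_mpoly \<phi> p * map_mpoly \<phi> q"
  proof (induct p rule: poly_mapping_add_single_induct)
    case 1
    show ?case
      by simp
  next
    case (2 f k v)
    then show ?case
      by (simp add: distrib_right map_mpoly_add[OF h] map_mpoly_mult_single[OF h] map_mpoly_single[OF h])
  qed
qed simp

lemma map_mpoly_mconst: "is_ring_hom \<phi> \<Longrightarrow> map_mpoly \<phi> (mconst c) = mconst (\<phi> c)"
  unfolding mconst_def by (rule map_mpoly_single)

lemma map_mpoly_mvar: "is_ring_hom \<phi> \<Longrightarrow> map_mpoly \<phi> (mvar v) = mvar v"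
  unfolding mvar_def by (simp add: map_mpoly_single is_ring_hom_def)

lemma comm_ring_hom_mconst_comp:
  "is_ring_hom \<phi> \<Longrightarrow> comm_ring_hom (\<lambda>c. mconst (\<phi> c) :: ('v, 'b::comm_ring_1) mpoly)"
  unfolding is_ring_hom_def by unfold_locales (auto simp: mconst.hom_add mconst.hom_mult)

lemma map_poly_mconst_comp:
  assumes h: "is_ring_hom \<phi>"
  shows "map_poly (map_mpoly \<phi>) (map_poly mconst q :: ('v, 'a::comm_ring_1) mpoly poly)
           = map_poly (\<lambda>c. mconst (\<phi> c)) q"
    and "map_poly mconst (map_poly \<phi> q) = (map_poly (\<lambda>c. mconst (\<phi> c)) q :: ('v, 'b::comm_ring_1) mpoly poly)"
  using h by (auto simp: map_poly_map_poly o_def map_mpoly_mconst is_ring_hom_def)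

section \<open>Univariate polynomials\<close>

lemma irreducible_bezout:
  fixes P q :: "'a::field poly"
  assumes irr: "irreducible P" and nd: "\<not> P dvd q"
  obtains u v where "u * P + v * q = 1"
proof -
  define S where "S = {u * P + v * q | u v. True}"
  have PS: "P \<in> S"
    unfolding S_def by (rule CollectI, rule exI[of _ 1], rule exI[of _ 0]) simp
  have qS: "q \<in> S"
    unfolding S_def by (rule CollectI, rule exI[of _ 0], rule exI[of _ 1]) simp
  have P0: "P \<noteq> 0"
    using irr by auto
  define n where "n = (LEAST n. \<exists>g. g \<in> S \<and> g \<noteq> 0 \<and> degree g = n)"
  have "\<exists>g. g \<in> S \<and> g \<noteq> 0 \<and> degree g = n"
    unfolding n_def by (rule LeastI[of _ "degree P"]) (use PS P0 in blast)
  then obtain g where g: "g \<in> S" "g \<noteq> 0" "degree g = n"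
    by blast
  have minimal: "h = 0" if hS: "h \<in> S" "degree h < n" for h
    using hS not_less_Least[of "degree h"] unfolding n_def by blast
  obtain u0 v0 where g_eq: "g = u0 * P + v0 * q"
    using g(1) unfolding S_def by blast
  have dvd: "g dvd x" if xS: "x \<in> S" for x
  proof -
    obtain u v where x: "x = u * P + v * q"
      using xS unfolding S_def by blast
    have "x mod g = (u - (x div g) * u0) * P + (v - (x div g) * v0) * q"
      unfolding minus_div_mult_eq_mod[symmetric] x g_eq by (simp add: algebra_simps)
    then have "x mod g \<in> S"
      unfolding S_def by blast
    then have "x mod g = 0"
      using degree_mod_less[OF g(2), of x] minimal g(3) by auto
    then show ?thesis
      by (simp add: mod_eq_0_iff_dvd)
  qed
  obtain h where Ph: "P = g * h"
    using dvd[OF PS] by blast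
  have "is_unit g"
  proof (rule ccontr)
    assume "\<not> is_unit g"
    then have "is_unit h"
      using irreducibleD[OF irr Ph] by blast
    then have "P dvd g"
      using Ph by (metis dvd_mult_unit_iff dvd_refl)
    then show False
      using dvd[OF qS] nd dvd_trans by blast
  qed
  then obtain k where "1 = g * k"
    by (rule dvdE)
  then have "(k * u0) * P + (k * v0) * q = 1"
    using g_eq by (simp add: algebra_simps)
  then show ?thesis
    using that by blast
qed

lemma irreducible_degree_pos: "irreducible (P :: 'a::field poly) \<Longrightarrow> degree P > 0"
  using is_unit_iff_degree[of P] by (auto simp: irreducible_def)

lemma coeff_sum_monom_mult:
  fixes c :: "nat \<Rightarrow> 'a::comm_semiring_1"
  assumes "k > 0" "finite A"
  shows "coeff (\<Sum>j\<in>A. monom (c j) (k * j)) m = (if k dvd m \<and> m div k \<in> A then c (m div k) else 0)"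
proof (cases "k dvd m")
  case True
  then obtain j0 where m: "m = k * j0"
    by blast
  have "coeff (\<Sum>j\<in>A. monom (c j) (k * j)) m = (\<Sum>j\<in>A. if j = j0 then c j else 0)"
    using assms(1) unfolding coeff_sum coeff_monom m by (intro sum.cong) auto
  then show ?thesis
    using m assms by simp
next
  case False
  then show ?thesis
    by (auto simp: coeff_sum coeff_monom intro!: sum.neutral)
qed

lemma pderiv_eq_0_imp_char_dvd:
  fixes P :: "'a::field poly"
  assumes "pderiv P = 0" "coeff P m \<noteq> 0" "m > 0"
  shows "CHAR('a) dvd m"
proof -
  obtain n where "m = Suc n"
    using assms(3) by (cases m) auto
  then have "of_nat m * coeff P m = 0"
    using arg_cong[OF assms(1), of "\<lambda>p. coeff p n"] by (simp add: coeff_pderiv)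
  then show ?thesis
    using assms(2) of_nat_eq_0_iff_char_dvd by auto
qed

text \<open>Such a polynomial only involves the powers \<open>X\<^sup>p\<^sup>j\<close>, and \<open>p\<close>-th roots of its coefficients
  give a \<open>p\<close>-th root of it (Frobenius is additive).\<close>

lemma pderiv_eq_0_imp_char_power:
  fixes P :: "'a::field poly"
  assumes p: "CHAR('a) = p" "p \<noteq> 0" and roots: "\<And>x::'a. \<exists>y. y ^ p = x"
    and pderiv: "pderiv P = 0"
  shows "\<exists>Q. P = Q ^ p"
proof -
  have "prime p" and p1: "p > 1"
    using p prime_CHAR_semidom prime_gt_1_nat by auto
  from roots have "\<forall>x::'a. \<exists>y. y ^ p = x"
    by blast
  then obtain r where r: "\<And>x::'a. r x ^ p = x"
    by (metis choice)
  define Q where "Q = (\<Sum>j\<le>degree P. monom (r (coeff P (p * j))) j)"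
  have "Q ^ p = (\<Sum>j\<le>degree P. monom (r (coeff P (p * j))) j ^ p)"
    unfolding Q_def by (rule freshmans_dream_sum) (use \<open>prime p\<close> p in simp_all)
  also have "\<dots> = (\<Sum>j\<le>degree P. monom (coeff P (p * j)) (p * j))"
    by (simp add: monom_power r mult_ac)
  also have "\<dots> = P"
  proof (rule poly_eqI)
    fix m
    have "coeff P m = 0" if "\<not> (p dvd m \<and> m div p \<le> degree P)"
    proof (cases "p dvd m")
      case True
      then have "m > degree P"
        using that p1 by (metis div_le_dividend dual_order.trans linorder_not_le)
      then show ?thesis
        by (simp add: coeff_eq_0)
    next
      case False
      then show ?thesis
        using pderiv_eq_0_imp_char_dvd[OF pderiv, of m] p by (cases "m = 0") auto
    qed
    then show "coeff (\<Sum>j\<le>degree P. monom (coeff P (p * j)) (p * j)) m = coeff P m"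
      using p1 by (subst coeff_sum_monom_mult) auto
  qed
  finally show ?thesis
    by blast
qed

lemma perfect_irreducible_not_dvd_pderiv:
  fixes P :: "'a::field poly"
  assumes perf: "perfect_field TYPE('a)" and irr: "irreducible P"
  shows "\<not> P dvd pderiv P"
proof
  assume dvd: "P dvd pderiv P"
  have "pderiv P = 0"
  proof (rule ccontr)
    assume "pderiv P \<noteq> 0"
    then have "degree P \<le> degree (pderiv P)"
      using dvd_imp_degree_le[OF dvd] by blast
    then show False
      using degree_pderiv_le[of P] irreducible_degree_pos[OF irr] by linarith
  qed
  show False
  proof (cases "CHAR('a) = 0")
    case True
    have "coeff P (degree P) \<noteq> 0"
      using irr by (simp add: irreducible_def)
    then have "CHAR('a) dvd degree P"
      by (rule pderiv_eq_0_imp_char_dvd[OF \<open>pderiv P = 0\<close> _ irreducible_degree_pos[OF irr]])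
    then show False
      using irreducible_degree_pos[OF irr] True by simp
  next
    case False
    then have "\<forall>x::'a. \<exists>y. y ^ CHAR('a) = x"
      using perf unfolding perfect_field_def by simp
    then obtain Q where PQ: "P = Q ^ CHAR('a)"
      using pderiv_eq_0_imp_char_power[OF refl False _ \<open>pderiv P = 0\<close>] by metis
    have "CHAR('a) > 1"
      using False prime_CHAR_semidom prime_gt_1_nat by blast
    then have "CHAR('a) = Suc (CHAR('a) - 1)" "CHAR('a) - 1 \<noteq> 0"
      by simp_all
    then have "\<not> irreducible P"
      unfolding PQ by (metis is_unit_power_iff irreducible_def power_Suc)
    then show False
      using irr by contradiction
  qed
qed

lemma poly_map_poly_taylor1:
  fixes Q :: "'a::field poly"
  assumes "comm_ring_hom h"
  shows "\<exists>r. poly (map_poly h Q) (x + y)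
           = poly (map_poly h Q) x + poly (map_poly h (pderiv Q)) x * y + y ^ 2 * r"
proof -
  interpret comm_ring_hom h
    by fact
  show ?thesis
  proof (induct Q)
    case (pCons a Q)
    then obtain r where r: "poly (map_poly h Q) (x + y)
        = poly (map_poly h Q) x + poly (map_poly h (pderiv Q)) x * y + y ^ 2 * r"
      by blast
    have "poly (map_poly h (pCons a Q)) (x + y)
        = poly (map_poly h (pCons a Q)) x + poly (map_poly h (pderiv (pCons a Q))) x * y
          + y ^ 2 * (x * r + poly (map_poly h (pderiv Q)) x + y * r)"
      by (simp add: pderiv_pCons map_poly_pCons_hom map_poly_hom_add r algebra_simps power2_eq_square)
    then show ?case
      by blast
  qed (intro exI[of _ 0], simp)
qed

text \<open>In Newton's method the derivative \<open>d\<close> of \<open>p\<close> is a parameter, specified by the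
  first-order Taylor expansion, since \<^const>\<open>pderiv\<close> requires a ring without zero divisors.
  The Newton step \<open>t \<mapsto> t - p(t) u(t)\<close>, where \<open>u\<close> inverts \<open>d\<close> modulo \<open>p\<close>, keeps \<open>t \<equiv> y\<close>
  modulo \<open>p(y)\<close> and raises the power of \<open>p(y)\<close> dividing \<open>p(t)\<close> by one.\<close>

lemma newton_iteration:
  fixes p d u v :: "'r::comm_ring_1 poly"
  assumes bez: "u * d + v * p = 1"
    and taylor: "\<And>x h. \<exists>r. poly p (x + h) = poly p x + poly d x * h + h ^ 2 * r"
  shows "\<exists>t w w'. poly p t = poly p y ^ Suc m * w \<and> y - t = poly p y * w'"
proof (induct m)
  case 0
  have "poly p y = poly p y ^ Suc 0 * 1 \<and> y - y = poly p y * 0"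
    by simp
  then show ?case
    by blast
next
  case (Suc m)
  define A where "A = poly p y"
  obtain t w w' where t: "poly p t = A ^ Suc m * w" "y - t = A * w'"
    using Suc unfolding A_def by blast
  define T U where "T = poly p t" and "U = poly u t"
  have "1 - U * poly d t = poly v t * T"
    using arg_cong[OF bez, of "\<lambda>q. poly q t"] unfolding U_def T_def by (simp add: algebra_simps)
  obtain r where "poly p (t + - (T * U)) = poly p t + poly d t * - (T * U) + (- (T * U)) ^ 2 * r"
    using taylor by blast
  then have "poly p (t - T * U) = T * (1 - U * poly d t) + T ^ 2 * U ^ 2 * r"
    unfolding T_def by (simp add: algebra_simps power2_eq_square)
  also have "\<dots> = T ^ 2 * (poly v t + U ^ 2 * r)"
    unfolding \<open>1 - U * poly d t = poly v t * T\<close> by (simp add: algebra_simps power2_eq_square)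
  also have "\<dots> = A ^ Suc (Suc m) * (A ^ m * w ^ 2 * (poly v t + U ^ 2 * r))"
    unfolding T_def t by (simp add: algebra_simps power2_eq_square)
  finally have "poly p (t - T * U) = A ^ Suc (Suc m) * (A ^ m * w ^ 2 * (poly v t + U ^ 2 * r))" .
  moreover have "y - (t - T * U) = A * (w' + A ^ m * w * U)"
    using t unfolding T_def by (simp add: algebra_simps)
  ultimately show ?case
    unfolding A_def by blast
qed

lemma newton_lift:
  fixes J :: "'r::comm_ring_1 set" and p d u v :: "'r poly"
  assumes J: "is_ideal J" and bez: "u * d + v * p = 1"
    and taylor: "\<And>x h. \<exists>r. poly p (x + h) = poly p x + poly d x * h + h ^ 2 * r"
    and root: "poly p y ^ e \<in> J"
  obtains t where "poly p t \<in> J" "(y - t) ^ e \<in> J"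
proof (cases e)
  case 0
  then have "J = UNIV"
    using root ideal_eq_UNIV[OF J] by simp
  then show ?thesis
    using that by blast
next
  case (Suc m)
  obtain t w w' where t: "poly p t = poly p y ^ e * w" "y - t = poly p y * w'"
    using newton_iteration[OF bez taylor, of y m] Suc by blast
  have "poly p t \<in> J"
    unfolding t using ideal_mult_right[OF J root] .
  moreover have "(y - t) ^ e \<in> J"
    unfolding t power_mult_distrib using ideal_mult_right[OF J root] .
  ultimately show ?thesis
    using that by blast
qed

section \<open>Stem fields\<close>

lemma poly_eq_sum_lessThan:
  fixes p :: "'a::comm_semiring_1 poly"
  shows "degree p < n \<Longrightarrow> poly p x = (\<Sum>j<n. coeff p j * x ^ j)"
  unfolding poly_altdef by (intro sum.mono_neutral_left) (auto simp: coeff_eq_0)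

locale stem_field =
  fixes \<phi> :: "'a::field \<Rightarrow> 'b::field" and \<zeta> :: 'b and P :: "'a poly"
  assumes stem: "is_stem_field \<phi> \<zeta> P" and irr: "irreducible P"
begin

lemma hom: "is_ring_hom \<phi>"
  using stem by (simp add: is_stem_field_def)

sublocale field_hom \<phi>
  using hom unfolding is_ring_hom_def by unfold_locales auto

interpretation map_poly_hom: map_poly_idom_hom \<phi> ..

lemma stem_root: "poly (map_poly \<phi> P) \<zeta> = 0"
  using stem by (simp add: is_stem_field_def)

lemma stem_generates: "\<exists>q. y = poly (map_poly \<phi> q) \<zeta>"
  using stem by (simp add: is_stem_field_def)

lemma degree_pos: "degree P > 0"
  using irr by (rule irreducible_degree_pos)

lemma stem_root_iff_dvd: "poly (map_poly \<phi> q) \<zeta> = 0 \<longleftrightarrow> P dvd q"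
proof
  assume "poly (map_poly \<phi> q) \<zeta> = 0"
  show "P dvd q"
  proof (rule ccontr)
    assume "\<not> P dvd q"
    then obtain u v where "u * P + v * q = 1"
      using irreducible_bezout[OF irr] by blast
    then have "poly (map_poly \<phi> (u * P + v * q)) \<zeta> = 1"
      by simp
    then show False
      using \<open>poly (map_poly \<phi> q) \<zeta> = 0\<close>
      by (simp add: map_poly_hom.hom_add map_poly_hom.hom_mult stem_root)
  qed
next
  assume "P dvd q"
  then obtain r where "q = P * r"
    by blast
  then show "poly (map_poly \<phi> q) \<zeta> = 0"
    by (simp add: map_poly_hom.hom_mult stem_root)
qed

lemma stem_root_degree_less:
  assumes "degree q < degree P" "poly (map_poly \<phi> q) \<zeta> = 0"
  shows "q = 0"
proof (rule ccontr)
  assume "q \<noteq> 0"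
  moreover have "P dvd q"
    using assms(2) stem_root_iff_dvd by blast
  ultimately show False
    using dvd_imp_degree_le[of P q] assms(1) by linarith
qed

lemma power_basis_spans: "\<exists>k. y = (\<Sum>j<degree P. \<phi> (k j) * \<zeta> ^ j)"
proof -
  obtain q where q: "y = poly (map_poly \<phi> q) \<zeta>"
    using stem_generates by blast
  define r where "r = q mod P"
  have "poly (map_poly \<phi> q) \<zeta> = poly (map_poly \<phi> (q div P * P + r)) \<zeta>"
    unfolding r_def by simp
  then have y: "y = poly (map_poly \<phi> r) \<zeta>"
    using q by (simp add: map_poly_hom.hom_add map_poly_hom.hom_mult stem_root)
  have "P \<noteq> 0"
    using degree_pos by auto
  then have "degree r < degree P"
    using degree_mod_less[of P q] degree_pos unfolding r_def by auto
  then have "degree (map_poly \<phi> r) < degree P"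
    by simp
  then have "y = (\<Sum>j<degree P. \<phi> (coeff r j) * \<zeta> ^ j)"
    unfolding y by (subst poly_eq_sum_lessThan) simp_all
  then show ?thesis
    by blast
qed

lemma power_basis_independent:
  assumes "(\<Sum>j<degree P. \<phi> (k j) * \<zeta> ^ j) = 0"
  shows "\<forall>j<degree P. k j = 0"
proof -
  define q where "q = (\<Sum>j<degree P. monom (k j) j)"
  have "degree q \<le> degree P - 1"
    unfolding q_def by (intro degree_sum_le) (auto intro: order.trans[OF degree_monom_le])
  then have "degree q < degree P"
    using degree_pos by linarith
  moreover have "poly (map_poly \<phi> q) \<zeta> = 0"
    using assms unfolding q_def by (simp add: map_poly_hom.hom_sum poly_sum poly_monom)
  ultimately have "q = 0"
    by (rule stem_root_degree_less)
  then have "coeff q j = 0" for j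
    by simp
  then have "(if j < degree P then k j else 0) = 0" for j
    unfolding q_def by (simp add: coeff_sum coeff_monom)
  then show ?thesis
    by presburger
qed

lemma dim_mod_tower:
  fixes J :: "('v, 'b) mpoly set"
  assumes J: "is_ideal J" and fC: "finite C"
    and span: "spans_mod (\<lambda>c p. mconst c * p) J C (\<lambda>x. x)"
    and indep: "independent_mod (\<lambda>c p. mconst c * p) J C (\<lambda>x. x)"
  shows "dim_mod (\<lambda>c p. mconst (\<phi> c) * p) J = degree P * card C"
proof -
  interpret vector_space "\<lambda>c (p :: ('v, 'b) mpoly). mconst (\<phi> c) * p"
    by (rule vector_space_scale_hom[OF comm_ring_hom_mconst_comp[OF hom]])
  define A where "A = {..<degree P} \<times> C"
  define v where "v a = mconst (\<zeta> ^ fst a) * snd a" for a :: "nat \<times> ('v, 'b) mpoly"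
  have regroup: "(\<Sum>a\<in>A. mconst (\<phi> (c a)) * v a)
      = (\<Sum>x\<in>C. mconst (\<Sum>j<degree P. \<phi> (c (j, x)) * \<zeta> ^ j) * x)" for c
  proof -
    have "(\<Sum>a\<in>A. mconst (\<phi> (c a)) * v a)
        = (\<Sum>j<degree P. \<Sum>x\<in>C. mconst (\<phi> (c (j, x))) * (mconst (\<zeta> ^ j) * x))"
      unfolding A_def v_def by (simp add: sum.cartesian_product case_prod_beta)
    also have "\<dots> = (\<Sum>x\<in>C. \<Sum>j<degree P. mconst (\<phi> (c (j, x))) * (mconst (\<zeta> ^ j) * x))"
      by (rule sum.swap)
    finally show ?thesis
      by (simp add: mconst.hom_sum mconst.hom_mult sum_distrib_right mult.assoc)
  qed
  have "spans_mod (\<lambda>c p. mconst (\<phi> c) * p) J A v"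
    unfolding spans_mod_def
  proof
    fix p
    obtain l where l: "p - (\<Sum>x\<in>C. mconst (l x) * x) \<in> J"
      using span unfolding spans_mod_def by blast
    have "\<forall>x. \<exists>k. l x = (\<Sum>j<degree P. \<phi> (k j) * \<zeta> ^ j)"
      using power_basis_spans by blast
    then obtain k where "\<And>x. l x = (\<Sum>j<degree P. \<phi> (k x j) * \<zeta> ^ j)"
      by (metis choice)
    then have "p - (\<Sum>a\<in>A. mconst (\<phi> (k (snd a) (fst a))) * v a) \<in> J"
      unfolding regroup using l by simp
    then show "\<exists>c. p - (\<Sum>a\<in>A. mconst (\<phi> (c a)) * v a) \<in> J"
      by (rule exI[of _ "\<lambda>a. k (snd a) (fst a)"])
  qed
  moreover have "independent_mod (\<lambda>c p. mconst (\<phi> c) * p) J A v"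
    unfolding independent_mod_def
  proof (intro allI impI ballI)
    fix c a assume "(\<Sum>a\<in>A. mconst (\<phi> (c a)) * v a) \<in> J" and a: "a \<in> A"
    then have "(\<Sum>x\<in>C. mconst (\<Sum>j<degree P. \<phi> (c (j, x)) * \<zeta> ^ j) * x) \<in> J"
      unfolding regroup by simp
    then have "\<forall>x\<in>C. (\<Sum>j<degree P. \<phi> (c (j, x)) * \<zeta> ^ j) = 0"
      using indep unfolding independent_mod_def
      by (elim allE[of _ "\<lambda>x. \<Sum>j<degree P. \<phi> (c (j, x)) * \<zeta> ^ j"]) blast
    then show "c a = 0"
      using a power_basis_independent unfolding A_def by fastforce
  qed
  ultimately have "dim_mod (\<lambda>c p. mconst (\<phi> c) * p) J = card A"
    using fC subspace_ideal[OF comm_ring_hom_mconst_comp[OF hom] J] unfolding A_def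
    by (intro dim_mod_eq_card) auto
  then show ?thesis
    unfolding A_def by (simp add: card_cartesian_product)
qed

end

lemma spans_quot_eq_spans_mod: "spans_quot J B = spans_mod (\<lambda>c p. mconst c * p) J B (\<lambda>x. x)"
  by (simp add: spans_quot_def spans_mod_def)

lemma ideal_deg_eq_dim_mod: "ideal_deg J = dim_mod (\<lambda>c p. mconst c * p) J"
  by (simp add: ideal_deg_def dim_mod_def spans_quot_eq_spans_mod)

section \<open>Extending the ideal to the stem field\<close>

locale scalar_extension = stem_field \<phi> \<zeta> P
  for \<phi> :: "'a::field \<Rightarrow> 'b::field" and \<zeta> P +
  fixes I :: "('v, 'a) mpoly set" and xn :: 'v and e :: nat and t :: "('v, 'a) mpoly"
  assumes ideal: "is_ideal I" and separable: "\<not> P dvd pderiv P"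
    and root_t: "eval_upoly P t \<in> I" and nilpotent_t: "(mvar xn - t) ^ e \<in> I"
begin

definition I' :: "('v, 'b) mpoly set" where
  "I' = ideal_gen (map_mpoly \<phi> ` I \<union> {(mvar xn - mconst \<zeta>) ^ e})"

interpretation coeff_hom: comm_ring_hom "map_mpoly \<phi> :: ('v, 'a) mpoly \<Rightarrow> ('v, 'b) mpoly"
  by (rule comm_ring_hom_map_mpoly[OF hom])

interpretation coeff_poly_hom: map_poly_comm_ring_hom "map_mpoly \<phi> :: ('v, 'a) mpoly \<Rightarrow> ('v, 'b) mpoly" ..

lemma ideal_I': "is_ideal I'"
  unfolding I'_def by (rule is_ideal_ideal_gen)

lemma map_mpoly_mem_I': "g \<in> I \<Longrightarrow> map_mpoly \<phi> g \<in> I'"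
  unfolding I'_def by (rule subsetD[OF ideal_gen_superset]) simp

lemma generator_mem_I': "(mvar xn - mconst \<zeta>) ^ e \<in> I'"
  unfolding I'_def by (rule subsetD[OF ideal_gen_superset]) simp

lemma map_mpoly_eval_upoly:
  fixes x :: "('v, 'a) mpoly"
  shows "map_mpoly \<phi> (eval_upoly q x) = poly (map_poly (\<lambda>c. mconst (\<phi> c)) q) (map_mpoly \<phi> x)"
proof -
  have "map_mpoly \<phi> (eval_upoly q x) = poly (map_poly (map_mpoly \<phi>) (map_poly mconst q)) (map_mpoly \<phi> x)"
    unfolding eval_upoly_def by (simp only: coeff_hom.poly_map_poly)
  then show ?thesis
    by (simp only: map_poly_mconst_comp(1)[OF hom])
qed

lemma poly_mconst_comp_at_zeta:
  "poly (map_poly (\<lambda>c. mconst (\<phi> c)) q) (mconst \<zeta>) = (mconst (poly (map_poly \<phi> q) \<zeta>) :: ('v, 'b) mpoly)"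
  unfolding map_poly_mconst_comp(2)[OF hom, symmetric] by (rule mconst.poly_map_poly)

text \<open>\<open>\<phi>(t) - \<zeta>\<close> is nilpotent modulo \<open>I'\<close>, being the sum of \<open>X\<^sub>n - \<zeta>\<close> and \<open>\<phi>(t - X\<^sub>n)\<close>, and it
  is a root of \<open>P\<close> there; as \<open>P'(\<zeta>) \<noteq> 0\<close>, it must vanish.\<close>

lemma zeta_congruent_t: "mconst \<zeta> - map_mpoly \<phi> t \<in> I'"
proof -
  note J = ideal_I'
  define n where "n = map_mpoly \<phi> t - mconst \<zeta>"
  have "map_mpoly \<phi> ((mvar xn - t) ^ e) \<in> I'"
    by (rule map_mpoly_mem_I'[OF nilpotent_t])
  then have "(- map_mpoly \<phi> (mvar xn - t)) ^ e \<in> I'"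
    unfolding power_minus[of "map_mpoly \<phi> (mvar xn - t)"] coeff_hom.hom_power[symmetric]
    by (rule ideal_mult_left[OF J])
  then have "((mvar xn - mconst \<zeta>) + - map_mpoly \<phi> (mvar xn - t)) ^ (e + e) \<in> I'"
    by (rule power_add_mem_ideal[OF J generator_mem_I'])
  then have nilpotent: "n ^ (e + e) \<in> I'"
    unfolding n_def by (simp add: coeff_hom.hom_minus map_mpoly_mvar[OF hom])
  define c where "c = poly (map_poly \<phi> (pderiv P)) \<zeta>"
  have "c \<noteq> 0"
    unfolding c_def using stem_root_iff_dvd separable by simp
  obtain r where "poly (map_poly (\<lambda>c. mconst (\<phi> c)) P) (mconst \<zeta> + n)
      = poly (map_poly (\<lambda>c. mconst (\<phi> c)) P) (mconst \<zeta>)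
        + poly (map_poly (\<lambda>c. mconst (\<phi> c)) (pderiv P)) (mconst \<zeta>) * n + n ^ 2 * r"
    using poly_map_poly_taylor1[OF comm_ring_hom_mconst_comp[OF hom]] by blast
  then have "map_mpoly \<phi> (eval_upoly P t) = mconst c * n + n ^ 2 * r"
    unfolding map_mpoly_eval_upoly poly_mconst_comp_at_zeta c_def n_def by (simp add: stem_root)
  then have "mconst (inverse c) * (mconst c * n + n ^ 2 * r) \<in> I'"
    using map_mpoly_mem_I'[OF root_t] by (simp add: ideal_mult_left[OF J])
  moreover have "mconst (inverse c) * mconst c = (1 :: ('v, 'b) mpoly)"
    using \<open>c \<noteq> 0\<close> by (simp flip: mconst.hom_mult)
  then have "mconst (inverse c) * (mconst c * n + n ^ 2 * r) = n * (1 + n * (mconst (inverse c) * r))"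
    by (simp add: algebra_simps power2_eq_square)
  ultimately have "n \<in> I'"
    using nilpotent_mem_ideal[OF J nilpotent] by simp
  then show ?thesis
    using ideal_uminus[OF J] unfolding n_def by fastforce
qed

lemma map_mpoly_surj_mod_I': "\<exists>g. p - map_mpoly \<phi> g \<in> I'"
proof (induct p rule: poly_mapping_add_single_induct)
  case 1
  have "0 - map_mpoly \<phi> 0 \<in> I'"
    by (simp add: ideal_0[OF ideal_I'])
  then show ?case
    by blast
next
  case (2 f k v)
  obtain g where g: "f - map_mpoly \<phi> g \<in> I'"
    using 2 by blast
  obtain q where v: "v = poly (map_poly \<phi> q) \<zeta>"
    using stem_generates by blast
  have "poly (map_poly (\<lambda>c. mconst (\<phi> c)) q) (mconst \<zeta>)
      - poly (map_poly (\<lambda>c. mconst (\<phi> c)) q) (map_mpoly \<phi> t) \<in> I'"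
    by (rule poly_diff_mem_ideal[OF ideal_I' zeta_congruent_t])
  then have v_congruent: "mconst v - map_mpoly \<phi> (eval_upoly q t) \<in> I'"
    unfolding v poly_mconst_comp_at_zeta map_mpoly_eval_upoly .
  have "f + Poly_Mapping.single k v - map_mpoly \<phi> (g + eval_upoly q t * Poly_Mapping.single k 1)
      = (f - map_mpoly \<phi> g) + (mconst v - map_mpoly \<phi> (eval_upoly q t)) * Poly_Mapping.single k 1"
    using hom
    by (simp add: coeff_hom.hom_add coeff_hom.hom_mult mconst_mult_single map_mpoly_single
        is_ring_hom_def algebra_simps)
  also have "\<dots> \<in> I'"
    by (rule ideal_add[OF ideal_I' g ideal_mult_right[OF ideal_I' v_congruent]])
  finally show ?case
    by blast
qed

text \<open>Substituting \<open>\<zeta>\<close> for \<open>Z\<close> presents \<open>\<L>[X]\<close> as \<open>\<K>[X][Z]/\<langle>P\<rangle>\<close>.\<close>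

definition subst_zeta :: "('v, 'a) mpoly poly \<Rightarrow> ('v, 'b) mpoly" where
  "subst_zeta Q = poly (map_poly (map_mpoly \<phi>) Q) (mconst \<zeta>)"

interpretation subst_zeta: comm_ring_hom subst_zeta
  by unfold_locales
    (simp_all add: subst_zeta_def coeff_poly_hom.hom_add coeff_poly_hom.hom_mult)

lemma subst_zeta_const: "subst_zeta [:g:] = map_mpoly \<phi> g"
  unfolding subst_zeta_def by (simp add: coeff_hom.map_poly_pCons_hom)

lemma subst_zeta_map_poly_mconst: "subst_zeta (map_poly mconst q) = mconst (poly (map_poly \<phi> q) \<zeta>)"
  unfolding subst_zeta_def map_poly_mconst_comp(1)[OF hom] by (rule poly_mconst_comp_at_zeta)

lemma subst_zeta_surj: "\<exists>Q. subst_zeta Q = p"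
proof (induct p rule: poly_mapping_add_single_induct)
  case 1
  show ?case
    using subst_zeta.hom_zero by blast
next
  case (2 f k v)
  obtain Q where Q: "subst_zeta Q = f"
    using 2 by blast
  obtain q where v: "v = poly (map_poly \<phi> q) \<zeta>"
    using stem_generates by blast
  have "subst_zeta (Q + map_poly mconst q * [:Poly_Mapping.single k 1:]) = f + Poly_Mapping.single k v"
    using hom unfolding subst_zeta.hom_add subst_zeta.hom_mult subst_zeta_const subst_zeta_map_poly_mconst Q v
    by (simp add: map_mpoly_single is_ring_hom_def mconst_mult_single)
  then show ?case
    by blast
qed

lemma lookup_subst_zeta:
  "Poly_Mapping.lookup (subst_zeta Q) \<alpha> = poly (map_poly \<phi> (map_poly (\<lambda>g. Poly_Mapping.lookup g \<alpha>) Q)) \<zeta>"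
proof (induct Q)
  case (pCons a Q)
  have "subst_zeta (pCons a Q) = map_mpoly \<phi> a + mconst \<zeta> * subst_zeta Q"
    unfolding subst_zeta_def by (simp add: coeff_hom.map_poly_pCons_hom)
  moreover have "map_poly (\<lambda>g. Poly_Mapping.lookup g \<alpha>) (pCons a Q)
      = pCons (Poly_Mapping.lookup a \<alpha>) (map_poly (\<lambda>g. Poly_Mapping.lookup g \<alpha>) Q)"
    by (rule poly_eqI) (simp add: coeff_map_poly coeff_pCons split: nat.split)
  ultimately show ?case
    using pCons(2) by (simp add: lookup_add lookup_map_mpoly[OF hom] lookup_mconst_mult map_poly_pCons_hom)
qed (simp add: subst_zeta_def)

lemma subst_zeta_eq_0_imp_dvd:
  assumes Q0: "subst_zeta Q = 0"
  shows "map_poly mconst P dvd Q"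
proof -
  define c where "c = inverse (lead_coeff P)"
  have "c \<noteq> 0" "P \<noteq> 0"
    using degree_pos unfolding c_def by auto
  define Pm where "Pm = (map_poly mconst (Polynomial.smult c P) :: ('v, 'a) mpoly poly)"
  have dPm: "degree Pm = degree P"
    unfolding Pm_def using \<open>c \<noteq> 0\<close> by (subst degree_map_poly) simp_all
  have lPm: "coeff Pm (degree Pm) = 1"
    unfolding dPm unfolding Pm_def c_def using \<open>P \<noteq> 0\<close> by simp
  then have "Pm \<noteq> 0"
    by auto
  obtain q1 q2 where pd: "pseudo_divmod Q Pm = (q1, q2)"
    by (cases "pseudo_divmod Q Pm") auto
  have Q: "Q = Pm * q1 + q2"
    using pseudo_divmod(1)[OF \<open>Pm \<noteq> 0\<close> pd] lPm by simp
  have dq2: "q2 = 0 \<or> degree q2 < degree P"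
    using pseudo_divmod(2)[OF \<open>Pm \<noteq> 0\<close> pd] dPm by simp
  have "subst_zeta Pm = 0"
    unfolding Pm_def subst_zeta_map_poly_mconst by (simp add: map_poly_hom_smult stem_root)
  then have q2_root: "subst_zeta q2 = 0"
    using Q0 unfolding Q subst_zeta.hom_add subst_zeta.hom_mult by simp
  have "coeff q2 j = 0" for j
  proof (rule poly_mapping_eqI)
    fix \<alpha>
    define R where "R = map_poly (\<lambda>g. Poly_Mapping.lookup g \<alpha>) q2"
    have "R = 0"
    proof (cases "q2 = 0")
      case False
      have "degree R \<le> degree q2"
        unfolding R_def by (rule degree_map_poly_le)
      then have "degree R < degree P"
        using False dq2 by linarith
      moreover have "poly (map_poly \<phi> R) \<zeta> = 0"
        using lookup_subst_zeta[of q2 \<alpha>] q2_root unfolding R_def by simp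
      ultimately show ?thesis
        by (rule stem_root_degree_less)
    qed (simp add: R_def)
    then show "Poly_Mapping.lookup (coeff q2 j) \<alpha> = Poly_Mapping.lookup 0 \<alpha>"
      unfolding R_def by (metis coeff_0 coeff_map_poly lookup_zero)
  qed
  then have "Q = Pm * q1"
    unfolding Q by (simp add: poly_eqI)
  moreover have "Pm = Polynomial.smult (mconst c) (map_poly mconst P)"
    unfolding Pm_def by (rule mconst.map_poly_hom_smult)
  ultimately show ?thesis
    by (simp add: dvd_smult)
qed

lemma poly_t_mem_of_subst_zeta_eq_0: "subst_zeta Q = 0 \<Longrightarrow> poly Q t \<in> I"
  using subst_zeta_eq_0_imp_dvd root_t ideal_mult_right[OF ideal]
  unfolding eval_upoly_def by (metis dvdE poly_mult)

text \<open>The ideal of \<open>\<L>[X]\<close> that corresponds to \<open>I\<close> under \<open>Q(\<zeta>) \<mapsto> Q(t)\<close>; it contains \<open>I'\<close>.\<close>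

definition lifted_ideal :: "('v, 'b) mpoly set" where
  "lifted_ideal = {p. \<forall>Q. subst_zeta Q = p \<longrightarrow> poly Q t \<in> I}"

lemma lifted_ideal_intro:
  assumes "subst_zeta Q0 = p" "poly Q0 t \<in> I"
  shows "p \<in> lifted_ideal"
  unfolding lifted_ideal_def
proof (intro CollectI allI impI)
  fix Q assume "subst_zeta Q = p"
  then have "poly (Q - Q0) t \<in> I"
    using assms(1) by (intro poly_t_mem_of_subst_zeta_eq_0) (simp add: subst_zeta.hom_minus)
  then show "poly Q t \<in> I"
    using ideal_diff_mem[OF ideal _ assms(2)] by simp
qed

lemma lifted_ideal_mem_iff: "subst_zeta Q \<in> lifted_ideal \<longleftrightarrow> poly Q t \<in> I"
  using lifted_ideal_intro unfolding lifted_ideal_def by blast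

lemma is_ideal_lifted_ideal: "is_ideal lifted_ideal"
  unfolding is_ideal_def
proof (intro conjI ballI allI)
  show "0 \<in> lifted_ideal"
    by (rule lifted_ideal_intro[of 0]) (simp_all add: ideal_0[OF ideal])
next
  fix a b assume "a \<in> lifted_ideal" "b \<in> lifted_ideal"
  moreover obtain Qa Qb where "subst_zeta Qa = a" "subst_zeta Qb = b"
    using subst_zeta_surj by metis
  ultimately show "a + b \<in> lifted_ideal"
    by (intro lifted_ideal_intro[of "Qa + Qb"])
      (auto simp: subst_zeta.hom_add lifted_ideal_mem_iff ideal_add[OF ideal])
next
  fix a r assume "a \<in> lifted_ideal"
  moreover obtain Qa Qr where "subst_zeta Qa = a" "subst_zeta Qr = r"
    using subst_zeta_surj by metis
  ultimately show "r * a \<in> lifted_ideal"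
    by (intro lifted_ideal_intro[of "Qr * Qa"])
      (auto simp: subst_zeta.hom_mult lifted_ideal_mem_iff ideal_mult_left[OF ideal])
qed

lemma I'_subset_lifted_ideal: "I' \<subseteq> lifted_ideal"
  unfolding I'_def
proof (rule ideal_gen_least[OF is_ideal_lifted_ideal], safe)
  fix g assume "g \<in> I"
  then show "map_mpoly \<phi> g \<in> lifted_ideal"
    by (intro lifted_ideal_intro[of "[:g:]"]) (simp_all add: subst_zeta_const)
next
  have "subst_zeta [:mvar xn, -1:] = mvar xn - mconst \<zeta>"
    unfolding subst_zeta_def
    by (simp add: coeff_hom.map_poly_pCons_hom coeff_hom.hom_uminus map_mpoly_mvar[OF hom])
  then show "(mvar xn - mconst \<zeta>) ^ e \<in> lifted_ideal"
    using nilpotent_t by (intro lifted_ideal_intro[of "[:mvar xn, -1:] ^ e"]) (simp_all add: subst_zeta.hom_power)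
qed

lemma map_mpoly_mem_I'_iff: "map_mpoly \<phi> g \<in> I' \<longleftrightarrow> g \<in> I"
  using I'_subset_lifted_ideal lifted_ideal_mem_iff[of "[:g:]"] map_mpoly_mem_I'
  by (auto simp: subst_zeta_const)

lemma map_mpoly_basis_mod_I':
  assumes span: "spans_mod (\<lambda>c p. mconst c * p) I B (\<lambda>x. x)"
    and indep: "independent_mod (\<lambda>c p. mconst c * p) I B (\<lambda>x. x)"
  shows "spans_mod (\<lambda>c p. mconst (\<phi> c) * p) I' B (map_mpoly \<phi>)"
    and "independent_mod (\<lambda>c p. mconst (\<phi> c) * p) I' B (map_mpoly \<phi>)"
proof -
  have map_sum: "map_mpoly \<phi> (\<Sum>b\<in>B. mconst (c b) * b) = (\<Sum>b\<in>B. mconst (\<phi> (c b)) * map_mpoly \<phi> b)" for c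
    by (simp add: coeff_hom.hom_sum coeff_hom.hom_mult map_mpoly_mconst[OF hom])
  show "spans_mod (\<lambda>c p. mconst (\<phi> c) * p) I' B (map_mpoly \<phi>)"
    unfolding spans_mod_def
  proof
    fix p
    obtain g where g: "p - map_mpoly \<phi> g \<in> I'"
      using map_mpoly_surj_mod_I' by blast
    obtain c where "g - (\<Sum>b\<in>B. mconst (c b) * b) \<in> I"
      using span unfolding spans_mod_def by blast
    then have "map_mpoly \<phi> g - (\<Sum>b\<in>B. mconst (\<phi> (c b)) * map_mpoly \<phi> b) \<in> I'"
      unfolding map_sum[symmetric] coeff_hom.hom_minus[symmetric] by (rule map_mpoly_mem_I')
    from ideal_add[OF ideal_I' g this]
    have "p - (\<Sum>b\<in>B. mconst (\<phi> (c b)) * map_mpoly \<phi> b) \<in> I'"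
      by simp
    then show "\<exists>c. p - (\<Sum>b\<in>B. mconst (\<phi> (c b)) * map_mpoly \<phi> b) \<in> I'"
      by blast
  qed
  show "independent_mod (\<lambda>c p. mconst (\<phi> c) * p) I' B (map_mpoly \<phi>)"
    using indep map_mpoly_mem_I'_iff unfolding independent_mod_def by (simp flip: map_sum)
qed

lemma ideal_deg_eq_degree_mult:
  assumes "zero_dimensional I"
  shows "ideal_deg I = degree P * ideal_deg I'"
proof -
  interpret K: vector_space "\<lambda>c (p :: ('v, 'a) mpoly). mconst c * p"
    by (rule vector_space_scale_hom[OF mconst.comm_ring_hom_axioms])
  interpret L: vector_space "\<lambda>c (p :: ('v, 'b) mpoly). mconst c * p"
    by (rule vector_space_scale_hom[OF mconst.comm_ring_hom_axioms])
  interpret KL: vector_space "\<lambda>c (p :: ('v, 'b) mpoly). mconst (\<phi> c) * p"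
    by (rule vector_space_scale_hom[OF comm_ring_hom_mconst_comp[OF hom]])
  obtain B0 where B0: "finite B0" "spans_quot I B0"
    using assms unfolding zero_dimensional_def by blast
  obtain B where B: "finite B" "spans_mod (\<lambda>c p. mconst c * p) I B (\<lambda>x. x)"
    "independent_mod (\<lambda>c p. mconst c * p) I B (\<lambda>x. x)"
    by (rule K.spans_mod_obtain_basis[OF subspace_ideal[OF mconst.comm_ring_hom_axioms ideal]
          B0(1) B0(2)[unfolded spans_quot_eq_spans_mod]])
  note B' = map_mpoly_basis_mod_I'[OF B(2,3)]
  have "ideal_deg I = card B"
    unfolding ideal_deg_eq_dim_mod
    using B by (intro K.dim_mod_eq_card subspace_ideal[OF mconst.comm_ring_hom_axioms ideal])
  also have "\<dots> = dim_mod (\<lambda>c p. mconst (\<phi> c) * p) I'"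
    using B(1) B' by (intro KL.dim_mod_eq_card[symmetric] subspace_ideal[OF comm_ring_hom_mconst_comp[OF hom] ideal_I'])
  finally have deg_I: "ideal_deg I = dim_mod (\<lambda>c p. mconst (\<phi> c) * p) I'" .
  have "spans_mod (\<lambda>c p. mconst c * p) I' B (map_mpoly \<phi>)"
    unfolding spans_mod_def
  proof
    fix p
    obtain c where "p - (\<Sum>b\<in>B. mconst (\<phi> (c b)) * map_mpoly \<phi> b) \<in> I'"
      using B'(1) unfolding spans_mod_def by blast
    then show "\<exists>c. p - (\<Sum>b\<in>B. mconst (c b) * map_mpoly \<phi> b) \<in> I'"
      by (rule exI[of _ "\<lambda>b. \<phi> (c b)"])
  qed
  then have "spans_mod (\<lambda>c p. mconst c * p) I' (map_mpoly \<phi> ` B) (\<lambda>x. x)"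
    by (rule L.spans_mod_image[OF B(1)])
  then obtain C where C: "finite C" "spans_mod (\<lambda>c p. mconst c * p) I' C (\<lambda>x. x)"
    "independent_mod (\<lambda>c p. mconst c * p) I' C (\<lambda>x. x)"
    by (rule L.spans_mod_obtain_basis[OF subspace_ideal[OF mconst.comm_ring_hom_axioms ideal_I']
          finite_imageI[OF B(1)]])
  have "ideal_deg I' = card C"
    unfolding ideal_deg_eq_dim_mod
    using C by (intro L.dim_mod_eq_card subspace_ideal[OF mconst.comm_ring_hom_axioms ideal_I'])
  then show ?thesis
    using deg_I dim_mod_tower[OF ideal_I' C] by simp
qed

end

theorem lemma7:
  fixes I M :: "('v::finite, 'a::field) mpoly set"
    and xn :: 'v
    and P :: "'a poly" and e f :: nat
    and \<phi> :: "'a \<Rightarrow> 'b::field" and \<zeta> :: 'b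
  assumes "perfect_field TYPE('a)"
    and "zero_dimensional I"
    and "is_maximal_ideal M"
    and "is_primary_for I M"
    and "is_minpoly_mod I (mvar xn) (P ^ e)"
    and "irreducible P" and "degree P = f"
    and "is_stem_field \<phi> \<zeta> P"
  shows "real (ideal_deg (ideal_gen (map_mpoly \<phi> ` I \<union> {(mvar xn - mconst \<zeta>) ^ e})))
         = real (ideal_deg I) / real f"
proof -
  interpret stem_field \<phi> \<zeta> P
    using assms(6,8) by unfold_locales
  have I: "is_ideal I"
    using assms(2) unfolding zero_dimensional_def by blast
  have separable: "\<not> P dvd pderiv P"
    using assms(1,6) by (rule perfect_irreducible_not_dvd_pderiv)
  obtain u v where "u * P + v * pderiv P = 1"
    using irreducible_bezout[OF assms(6) separable] by blast
  then have bezout: "map_poly mconst v * map_poly mconst (pderiv P) + map_poly mconst u * map_poly mconst P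
      = (1 :: ('v, 'a) mpoly poly)"
    by (simp flip: mconst_poly.hom_mult mconst_poly.hom_add add.commute)
  have "poly (map_poly mconst P) (mvar xn) ^ e \<in> I"
    using assms(5) unfolding is_minpoly_mod_def eval_upoly_def by (simp add: mconst_poly.hom_power)
  then obtain t where "poly (map_poly mconst P) t \<in> I" "(mvar xn - t) ^ e \<in> I"
    using newton_lift[OF I bezout poly_map_poly_taylor1[OF mconst.comm_ring_hom_axioms]] by blast
  then interpret scalar_extension \<phi> \<zeta> P I xn e t
    using I separable by unfold_locales (simp_all add: eval_upoly_def)
  have "ideal_deg I = f * ideal_deg I'"
    using ideal_deg_eq_degree_mult[OF assms(2)] assms(7) by simp
  then show ?thesis
    using degree_pos assms(7) unfolding I'_def by (simp add: field_simps)
qed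

end
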